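(* Let $F:\mathbb{R}^d\to\mathbb{R}$ be continuously differentiable with $L$-Lipschitz gradient and strongly convex with parameter $c>0$, i.e. $F(\bar w)\ge F(w)+\nabla F(w)^\top(\bar w-w)+\tfrac c2\|\bar w-w\|_2^2$ for all $w,\bar w$; let $w_*$ be its unique minimizer and $F_*=F(w_* )$. Consider the low-precision SGD iteration $w_{k+1}=w_k-\bar\alpha\,\tilde g(w_k,\xi_k)$ with fixed stepsize $\bar\alpha$ and $\tilde g(w_k,\xi_k)=q_k\,g(w_k,\xi_k)+\varepsilon_k$. Assume: (a) the iterates lie in an open set on which $F$ is bounded below by $F_{\inf}=F_*$; (b) there exist scalars $\mu_G\ge\mu>0$ such that for all $k$, $\nabla F(w_k)^\top\mathbb{E}_{\xi_k}[\tilde g(w_k,\xi_k)]\ge q_{\min}\mu\|\nabla F(w_k)\|_2^2$ and $\|\mathbb{E}_{\xi_k}[\tilde g(w_k,\xi_k)]\|_2\le q_{\max}\mu_G\|\nabla F(w_k)\|_2$; (c) there exist scalars $\tilde M\ge0$, $\tilde M_V\ge0$ such that for all $k$, $\mathbb{E}_{\xi_k}\|\tilde g(w_k,\xi_k)\|_2^2-\|\mathbb{E}_{\xi_k}[\tilde g(w_k,\xi_k)]\|_2^2\le\tilde M+\tilde M_V\|\nabla F(w_k)\|_2^2$. Let $\mu_q:=q_{\min}\mu$, $\tilde M_G:=\tilde M_V+q_{\max}^2\mu_G^2$, and suppose $0<\bar\alpha\le\frac{\mu_q}{L\tilde M_G}$. Then for all $k\in\mathbb{N}$, \[ \mathbb{E}[F(w_k)-F_*]\le\frac{\bar\alpha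 L\tilde M}{2c\mu_q}+(1-\bar\alpha c\mu_q)^{k-1}\Big(F(w_1)-F_*-\frac{\bar\alpha L\tilde M}{2c\mu_q}\Big), \] and the right-hand side converges as $k\to\infty$ to $\frac{\bar\alpha L\tilde M}{2c\mu_q}=\frac{1}{q_{\min}}\frac{\bar\alpha L\tilde M}{2c\mu}$.
   Context: The objective is $F(w)=\mathbb{E}_{\xi\sim\mathcal D}[\ell(\xi,w)]$, $w_1$ is a given initial point. At iteration $k$, $\xi_k$ is drawn i.i.d. from $\mathcal D$, $g(w_k,\xi_k)=\nabla F(w_k;\xi_k)$, $q_k\in[q_{\min},q_{\max}]\subset(0,1]$ with $q_{\min}>0$ is a shrinkage factor, and $\varepsilon_k$ is quantization noise with $\mathbb{E}[\varepsilon_k\mid\mathcal F_k]=0$ and $\mathbb{E}\|\varepsilon_k\|_2^2\le\sigma_\varepsilon^2$, $\mathcal F_k$ being the $\sigma$-algebra of all randomness up to iteration $k$. $\mathbb{E}_{\xi_k}[\cdot]$ denotes expectation over $(\xi_k,q_k,\varepsilon_k)$ conditional on $w_k$, and $\mathbb{E}[\cdot]$ is total expectation over all randomness. *)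

theory Defs
  imports "HOL-Probability.Probability"
begin

text \<open>Conditional expectation of a vector-valued random variable given the
sub-sigma-algebra G, taken componentwise along the standard basis
(the library only provides the real-valued conditional expectation).\<close>
definition vcond_exp :: "'a measure \<Rightarrow> 'a measure \<Rightarrow> ('a \<Rightarrow> 'v::euclidean_space) \<Rightarrow> 'a \<Rightarrow> 'v" where
  "vcond_exp M G X \<omega> = (\<Sum>b\<in>Basis. real_cond_exp M G (\<lambda>x. X x \<bullet> b) \<omega> *\<^sub>R b)"

end

theory Submission
  imports Defs
begin

(*
  The descent lemma for the L-smooth objective bounds one step by
  E F(w_{k+1}) <= E F(w_k) - alpha E <grad F(w_k), g_k> + alpha^2 L/2 E |g_k|^2.
  Conditioning on the past replaces g_k in the inner product by its conditional mean,
  so the moment assumptions bound the right-hand side by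
  E F(w_k) - alpha mu_q/2 E |grad F(w_k)|^2 + alpha^2 L Mt/2, the step-size condition
  alpha L M_G <= mu_q absorbing half of the descent.  The Polyak-Lojasiewicz inequality
  |grad F|^2 >= 2c (F - F_min), a consequence of strong convexity, turns this into the
  affine recursion e_{k+1} <= (1 - alpha c mu_q) e_k + alpha^2 L Mt/2 for the gaps
  e_k = E F(w_k) - F_min, whose solution is the stated bound; c <= L puts the
  contraction factor in [0,1).
*)

lemma lipschitz_gradient_descent:
  fixes F :: "'v::real_inner \<Rightarrow> real" and gradF :: "'v \<Rightarrow> 'v"
  assumes grad: "\<And>v. (F has_derivative (\<lambda>h. gradF v \<bullet> h)) (at v)"
    and lip: "\<And>v u. norm (gradF v - gradF u) \<le> L * norm (v - u)"
  shows "F u \<le> F v + gradF v \<bullet> (u - v) + L / 2 * (norm (u - v))\<^sup>2"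
proof -
  define h where "h = u - v"
  define \<psi> where "\<psi> t = L / 2 * t\<^sup>2 * (norm h)\<^sup>2 + t * (gradF v \<bullet> h) - F (v + t *\<^sub>R h)" for t :: real
  have "\<psi> 0 \<le> \<psi> 1"
  proof (rule DERIV_nonneg_imp_nondecreasing[of 0 1])
    fix t :: real assume t: "0 \<le> t" "t \<le> 1"
    have "((\<lambda>t. F (v + t *\<^sub>R h)) has_derivative (\<lambda>s. gradF (v + t *\<^sub>R h) \<bullet> (s *\<^sub>R h))) (at t)"
      by (rule has_derivative_compose[OF _ grad]) (auto intro!: derivative_eq_intros)
    then have "((\<lambda>t. F (v + t *\<^sub>R h)) has_real_derivative gradF (v + t *\<^sub>R h) \<bullet> h) (at t)"
      by (simp add: has_field_derivative_def mult.commute[of _ "gradF (v + t *\<^sub>R h) \<bullet> h"])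
    then have "(\<psi> has_real_derivative L * t * (norm h)\<^sup>2 + gradF v \<bullet> h - gradF (v + t *\<^sub>R h) \<bullet> h) (at t)"
      unfolding \<psi>_def by (auto intro!: derivative_eq_intros)
    moreover have "(gradF (v + t *\<^sub>R h) - gradF v) \<bullet> h \<le> L * t * (norm h)\<^sup>2"
    proof -
      have "(gradF (v + t *\<^sub>R h) - gradF v) \<bullet> h \<le> norm (gradF (v + t *\<^sub>R h) - gradF v) * norm h"
        by (rule norm_cauchy_schwarz)
      also have "\<dots> \<le> L * norm (t *\<^sub>R h) * norm h"
        using lip[of "v + t *\<^sub>R h" v] by (intro mult_right_mono) auto
      finally show ?thesis using t by (simp add: power2_eq_square mult_ac)
    qed
    ultimately show "\<exists>y. (\<psi> has_real_derivative y) (at t) \<and> 0 \<le> y"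
      by (intro exI[of _ "L * t * (norm h)\<^sup>2 + gradF v \<bullet> h - gradF (v + t *\<^sub>R h) \<bullet> h"])
        (simp add: inner_diff_left)
  qed simp
  then show ?thesis unfolding \<psi>_def h_def by simp
qed

lemma norm_grad_sq_le_suboptimality:
  fixes F :: "'v::real_inner \<Rightarrow> real" and gradF :: "'v \<Rightarrow> 'v"
  assumes grad: "\<And>v. (F has_derivative (\<lambda>h. gradF v \<bullet> h)) (at v)"
    and lip: "\<And>v u. norm (gradF v - gradF u) \<le> L * norm (v - u)"
    and L: "L > 0" and min: "\<And>v. F wstar \<le> F v"
  shows "(norm (gradF v))\<^sup>2 \<le> 2 * L * (F v - F wstar)"
proof -
  let ?u = "v - (1 / L) *\<^sub>R gradF v"
  have "F wstar \<le> F ?u" by (rule min)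
  also have "\<dots> \<le> F v + gradF v \<bullet> (?u - v) + L / 2 * (norm (?u - v))\<^sup>2"
    by (rule lipschitz_gradient_descent[OF grad lip])
  also have "\<dots> = F v - (norm (gradF v))\<^sup>2 / L + L / 2 * ((norm (gradF v))\<^sup>2 / L\<^sup>2)"
    using L by (simp add: power2_norm_eq_inner power_divide)
  also have "\<dots> = F v - (norm (gradF v))\<^sup>2 / (2 * L)"
    using L by (simp add: power2_eq_square field_simps)
  finally show ?thesis using L by (simp add: field_simps)
qed

lemma strongly_convex_gradient_dominance:
  fixes F :: "'v::real_inner \<Rightarrow> real" and gradF :: "'v \<Rightarrow> 'v"
  assumes strong: "\<And>v u. F u \<ge> F v + gradF v \<bullet> (u - v) + c / 2 * (norm (u - v))\<^sup>2"
    and c: "c > 0"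
  shows "2 * c * (F v - F u) \<le> (norm (gradF v))\<^sup>2"
proof -
  let ?d = "u - v" and ?g = "gradF v"
  have "0 \<le> (norm (?g + c *\<^sub>R ?d))\<^sup>2" by simp
  also have "\<dots> = (norm ?g)\<^sup>2 + 2 * c * (?g \<bullet> ?d) + c\<^sup>2 * (norm ?d)\<^sup>2"
    unfolding power2_norm_eq_inner
    by (simp add: inner_add_left inner_add_right inner_commute power2_eq_square algebra_simps)
  finally have "0 \<le> (norm ?g)\<^sup>2 + 2 * c * (?g \<bullet> ?d) + c\<^sup>2 * (norm ?d)\<^sup>2" .
  moreover have "2 * c * (F v - F u) \<le> 2 * c * (- (?g \<bullet> ?d) - c / 2 * (norm ?d)\<^sup>2)"
    using strong[of v u] c by (intro mult_left_mono) auto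
  ultimately show ?thesis by (simp add: power2_eq_square algebra_simps)
qed

lemma strong_convexity_modulus_le_lipschitz:
  fixes F :: "'v::euclidean_space \<Rightarrow> real" and gradF :: "'v \<Rightarrow> 'v"
  assumes grad: "\<And>v. (F has_derivative (\<lambda>h. gradF v \<bullet> h)) (at v)"
    and lip: "\<And>v u. norm (gradF v - gradF u) \<le> L * norm (v - u)"
    and strong: "\<And>v u. F u \<ge> F v + gradF v \<bullet> (u - v) + c / 2 * (norm (u - v))\<^sup>2"
  shows "c \<le> L"
proof -
  obtain b :: 'v where b: "b \<in> Basis" using nonempty_Basis by blast
  have "F b \<le> F 0 + gradF 0 \<bullet> (b - 0) + L / 2 * (norm (b - 0))\<^sup>2"
    by (rule lipschitz_gradient_descent[OF grad lip])
  moreover have "F b \<ge> F 0 + gradF 0 \<bullet> (b - 0) + c / 2 * (norm (b - 0))\<^sup>2" by (rule strong)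
  ultimately show ?thesis using b by simp
qed

lemma step_size_contraction_le_one:
  fixes \<alpha> c L \<mu>q MG :: real
  assumes "0 \<le> c" "c \<le> L" "0 < \<mu>q" "\<mu>q\<^sup>2 \<le> MG" "0 \<le> \<alpha>" "\<alpha> * L * MG \<le> \<mu>q"
  shows "\<alpha> * c * \<mu>q \<le> 1"
proof -
  have "(\<alpha> * c * \<mu>q) * \<mu>q = \<alpha> * c * \<mu>q\<^sup>2" by (simp add: power2_eq_square)
  also have "\<dots> \<le> \<alpha> * L * \<mu>q\<^sup>2" using assms by (intro mult_right_mono mult_left_mono) auto
  also have "\<dots> \<le> \<alpha> * L * MG" using assms by (intro mult_left_mono) auto
  also have "\<dots> \<le> 1 * \<mu>q" using assms by simp
  finally show ?thesis using \<open>0 < \<mu>q\<close> by (rule mult_right_le_imp_le)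
qed

lemma low_precision_step_size:
  fixes qmin qmax \<mu> \<mu>G MV L c \<alpha> :: real
  defines "\<mu>q \<equiv> qmin * \<mu>" and "MG \<equiv> MV + qmax\<^sup>2 * \<mu>G\<^sup>2"
  assumes q: "0 < qmin" "qmin \<le> qmax" and \<mu>: "0 < \<mu>" "\<mu> \<le> \<mu>G" and MV: "0 \<le> MV"
    and c: "0 < c" "c \<le> L" and \<alpha>: "0 < \<alpha>" "\<alpha> \<le> \<mu>q / (L * MG)"
  shows "\<alpha> * L * MG \<le> \<mu>q" and "0 < \<alpha> * c * \<mu>q" and "\<alpha> * c * \<mu>q \<le> 1"
proof -
  have \<mu>q: "0 < \<mu>q" unfolding \<mu>q_def using q \<mu> by simp
  have "qmin * \<mu> \<le> qmax * \<mu>G" using q \<mu> by (intro mult_mono) auto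
  then have "\<mu>q\<^sup>2 \<le> (qmax * \<mu>G)\<^sup>2" unfolding \<mu>q_def using q \<mu> by (intro power_mono) auto
  then have MG: "\<mu>q\<^sup>2 \<le> MG" unfolding MG_def using MV by (simp add: power_mult_distrib)
  have "0 < L * MG" using c MG \<mu>q by (simp add: less_le_trans[OF zero_less_power])
  then show step: "\<alpha> * L * MG \<le> \<mu>q" using \<alpha>(2) by (simp add: le_divide_eq mult.assoc)
  show "0 < \<alpha> * c * \<mu>q" using \<alpha> c \<mu>q by simp
  show "\<alpha> * c * \<mu>q \<le> 1"
    using c \<mu>q MG \<alpha> step by (intro step_size_contraction_le_one) auto
qed

lemma affine_recursion_bound:
  fixes e :: "nat \<Rightarrow> real"
  assumes r: "0 \<le> r" and rec: "\<And>n. n \<ge> 1 \<Longrightarrow> e (Suc n) \<le> r * e n + (1 - r) * B"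
    and n: "n \<ge> 1"
  shows "e n \<le> B + r ^ (n - 1) * (e 1 - B)"
  using n
proof (induction n rule: dec_induct)
  case base
  show ?case by simp
next
  case (step n)
  have "e (Suc n) \<le> r * e n + (1 - r) * B" using step.hyps(1) by (rule rec)
  also have "\<dots> \<le> r * (B + r ^ (n - 1) * (e 1 - B)) + (1 - r) * B"
    using step.IH r by (intro add_right_mono mult_left_mono)
  also have "\<dots> = B + r ^ (Suc n - 1) * (e 1 - B)"
    using step.hyps(1) by (cases n) (simp_all add: algebra_simps)
  finally show ?case .
qed

lemma tendsto_offset_geometric:
  fixes r :: real
  assumes "\<bar>r\<bar> < 1"
  shows "(\<lambda>k. B + r ^ (k - 1) * C) \<longlonglongrightarrow> B"
proof -
  have "(\<lambda>k. B + r ^ k * C) \<longlonglongrightarrow> B + 0 * C"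
    using assms by (intro tendsto_intros) simp
  then have "(\<lambda>k. B + r ^ (Suc k - 1) * C) \<longlonglongrightarrow> B" by simp
  then show ?thesis by (rule LIMSEQ_imp_Suc)
qed

lemma continuous_on_norm_diff_le_lipschitz:
  fixes f :: "'a::real_normed_vector \<Rightarrow> 'b::real_normed_vector"
  assumes "\<And>x y. norm (f x - f y) \<le> L * norm (x - y)" and "0 \<le> L"
  shows "continuous_on UNIV f"
proof (rule lipschitz_on_continuous_on)
  show "L-lipschitz_on UNIV f"
    by (rule lipschitz_onI) (use assms in \<open>auto simp: dist_norm\<close>)
qed

lemma integrable_norm_grad_comp_sq:
  fixes F :: "'v::real_inner \<Rightarrow> real" and gradF :: "'v \<Rightarrow> 'v"
  assumes "finite_measure M"
    and grad: "\<And>v. (F has_derivative (\<lambda>h. gradF v \<bullet> h)) (at v)"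
    and lip: "\<And>v u. norm (gradF v - gradF u) \<le> L * norm (v - u)"
    and L: "L > 0" and min: "\<And>v. F wstar \<le> F v"
    and W: "W \<in> borel_measurable M" and int_F: "integrable M (\<lambda>\<omega>. F (W \<omega>))"
  shows "integrable M (\<lambda>\<omega>. (norm (gradF (W \<omega>)))\<^sup>2)"
proof (rule Bochner_Integration.integrable_bound)
  interpret finite_measure M by fact
  show "integrable M (\<lambda>\<omega>. 2 * L * (F (W \<omega>) - F wstar))"
    using int_F by simp
  have "continuous_on UNIV gradF"
    using lip L by (intro continuous_on_norm_diff_le_lipschitz) auto
  then have [measurable]: "(\<lambda>\<omega>. gradF (W \<omega>)) \<in> borel_measurable M"
    using W by (rule borel_measurable_continuous_on)
  show "(\<lambda>\<omega>. (norm (gradF (W \<omega>)))\<^sup>2) \<in> borel_measurable M" by measurable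
  show "AE \<omega> in M. norm ((norm (gradF (W \<omega>)))\<^sup>2) \<le> norm (2 * L * (F (W \<omega>) - F wstar))"
  proof (rule AE_I2)
    fix \<omega>
    have "(norm (gradF (W \<omega>)))\<^sup>2 \<le> 2 * L * (F (W \<omega>) - F wstar)"
      by (rule norm_grad_sq_le_suboptimality[OF grad lip L min])
    then show "norm ((norm (gradF (W \<omega>)))\<^sup>2) \<le> norm (2 * L * (F (W \<omega>) - F wstar))"
      by (auto intro: order_trans[OF _ abs_ge_self])
  qed
qed

lemma integrable_mult_inner_Basis:
  fixes X Y :: "'a \<Rightarrow> 'v::euclidean_space"
  assumes [measurable]: "Y \<in> borel_measurable M" "X \<in> borel_measurable M"
    and int_Y: "integrable M (\<lambda>\<omega>. (norm (Y \<omega>))\<^sup>2)" and int_X: "integrable M (\<lambda>\<omega>. (norm (X \<omega>))\<^sup>2)"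
    and b: "b \<in> Basis"
  shows "integrable M (\<lambda>\<omega>. (Y \<omega> \<bullet> b) * (X \<omega> \<bullet> b))"
proof (rule Bochner_Integration.integrable_bound)
  show "integrable M (\<lambda>\<omega>. (norm (Y \<omega>))\<^sup>2 + (norm (X \<omega>))\<^sup>2)" using int_X int_Y by simp
  show "(\<lambda>\<omega>. (Y \<omega> \<bullet> b) * (X \<omega> \<bullet> b)) \<in> borel_measurable M" by measurable
  have "\<bar>(Y \<omega> \<bullet> b) * (X \<omega> \<bullet> b)\<bar> \<le> (norm (Y \<omega>))\<^sup>2 + (norm (X \<omega>))\<^sup>2" for \<omega>
  proof -
    have "\<bar>(Y \<omega> \<bullet> b) * (X \<omega> \<bullet> b)\<bar> \<le> 2 * \<bar>Y \<omega> \<bullet> b\<bar> * \<bar>X \<omega> \<bullet> b\<bar>"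
      by (simp add: abs_mult mult.assoc)
    also have "\<dots> \<le> \<bar>Y \<omega> \<bullet> b\<bar>\<^sup>2 + \<bar>X \<omega> \<bullet> b\<bar>\<^sup>2"
      by (rule sum_squares_bound)
    also have "\<dots> \<le> (norm (Y \<omega>))\<^sup>2 + (norm (X \<omega>))\<^sup>2"
      using b by (intro add_mono power_mono Basis_le_norm) auto
    finally show ?thesis .
  qed
  then show "AE \<omega> in M. norm ((Y \<omega> \<bullet> b) * (X \<omega> \<bullet> b)) \<le> norm ((norm (Y \<omega>))\<^sup>2 + (norm (X \<omega>))\<^sup>2)"
    by (intro AE_I2) simp
qed

lemma integral_inner_vcond_exp:
  fixes X Y :: "'a \<Rightarrow> 'v::euclidean_space"
  assumes "sigma_finite_subalgebra M G"
    and Y: "Y \<in> borel_measurable G" and X: "X \<in> borel_measurable M"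
    and int_X: "integrable M (\<lambda>\<omega>. (norm (X \<omega>))\<^sup>2)" and int_Y: "integrable M (\<lambda>\<omega>. (norm (Y \<omega>))\<^sup>2)"
  shows "integrable M (\<lambda>\<omega>. Y \<omega> \<bullet> X \<omega>)"
    and "integrable M (\<lambda>\<omega>. Y \<omega> \<bullet> vcond_exp M G X \<omega>)"
    and "(\<integral>\<omega>. Y \<omega> \<bullet> vcond_exp M G X \<omega> \<partial>M) = (\<integral>\<omega>. Y \<omega> \<bullet> X \<omega> \<partial>M)"
proof -
  interpret sigma_finite_subalgebra M G by fact
  have int_b: "integrable M (\<lambda>\<omega>. (Y \<omega> \<bullet> b) * (X \<omega> \<bullet> b))" if "b \<in> Basis" for b
    using measurable_from_subalg[OF subalg Y] X int_Y int_X that by (rule integrable_mult_inner_Basis)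
  have ce: "integrable M (\<lambda>\<omega>. (Y \<omega> \<bullet> b) * real_cond_exp M G (\<lambda>x. X x \<bullet> b) \<omega>)"
      "(\<integral>\<omega>. (Y \<omega> \<bullet> b) * real_cond_exp M G (\<lambda>x. X x \<bullet> b) \<omega> \<partial>M) = (\<integral>\<omega>. (Y \<omega> \<bullet> b) * (X \<omega> \<bullet> b) \<partial>M)"
    if "b \<in> Basis" for b
  proof -
    have Yb: "(\<lambda>\<omega>. Y \<omega> \<bullet> b) \<in> borel_measurable G" and Xb: "(\<lambda>\<omega>. X \<omega> \<bullet> b) \<in> borel_measurable M"
      using Y X by measurable
    show "integrable M (\<lambda>\<omega>. (Y \<omega> \<bullet> b) * real_cond_exp M G (\<lambda>x. X x \<bullet> b) \<omega>)"
      "(\<integral>\<omega>. (Y \<omega> \<bullet> b) * real_cond_exp M G (\<lambda>x. X x \<bullet> b) \<omega> \<partial>M) = (\<integral>\<omega>. (Y \<omega> \<bullet> b) * (X \<omega> \<bullet> b) \<partial>M)"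
      using real_cond_exp_intg[OF int_b[OF that] Yb Xb] by simp_all
  qed
  have inner_vcond: "Y \<omega> \<bullet> vcond_exp M G X \<omega> = (\<Sum>b\<in>Basis. (Y \<omega> \<bullet> b) * real_cond_exp M G (\<lambda>x. X x \<bullet> b) \<omega>)" for \<omega>
    unfolding vcond_exp_def by (simp add: inner_sum_right mult.commute)
  have inner_X: "Y \<omega> \<bullet> X \<omega> = (\<Sum>b\<in>Basis. (Y \<omega> \<bullet> b) * (X \<omega> \<bullet> b))" for \<omega>
    by (rule euclidean_inner)
  show "integrable M (\<lambda>\<omega>. Y \<omega> \<bullet> X \<omega>)"
    unfolding inner_X by (rule Bochner_Integration.integrable_sum) (rule int_b)
  show "integrable M (\<lambda>\<omega>. Y \<omega> \<bullet> vcond_exp M G X \<omega>)"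
    unfolding inner_vcond by (rule Bochner_Integration.integrable_sum) (rule ce(1))
  have "(\<integral>\<omega>. Y \<omega> \<bullet> vcond_exp M G X \<omega> \<partial>M)
      = (\<Sum>b\<in>Basis. \<integral>\<omega>. (Y \<omega> \<bullet> b) * real_cond_exp M G (\<lambda>x. X x \<bullet> b) \<omega> \<partial>M)"
    unfolding inner_vcond by (rule Bochner_Integration.integral_sum) (rule ce(1))
  also have "\<dots> = (\<Sum>b\<in>Basis. \<integral>\<omega>. (Y \<omega> \<bullet> b) * (X \<omega> \<bullet> b) \<partial>M)"
    by (rule sum.cong) (simp_all add: ce(2))
  also have "\<dots> = (\<integral>\<omega>. Y \<omega> \<bullet> X \<omega> \<partial>M)"
    unfolding inner_X by (rule Bochner_Integration.integral_sum[symmetric]) (rule int_b)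
  finally show "(\<integral>\<omega>. Y \<omega> \<bullet> vcond_exp M G X \<omega> \<partial>M) = (\<integral>\<omega>. Y \<omega> \<bullet> X \<omega> \<partial>M)" .
qed

lemma AE_cond_second_moment_le:
  fixes D :: "'a \<Rightarrow> 'v::euclidean_space" and n :: "'a \<Rightarrow> real"
  assumes "AE \<omega> in M. norm (vcond_exp M G D \<omega>) \<le> b * n \<omega>"
    and "AE \<omega> in M. real_cond_exp M G (\<lambda>x. (norm (D x))\<^sup>2) \<omega> - (norm (vcond_exp M G D \<omega>))\<^sup>2
                  \<le> Mt + MV * (n \<omega>)\<^sup>2"
  shows "AE \<omega> in M. real_cond_exp M G (\<lambda>x. (norm (D x))\<^sup>2) \<omega> \<le> Mt + (MV + b\<^sup>2) * (n \<omega>)\<^sup>2"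
  using assms
proof eventually_elim
  case (elim \<omega>)
  have "(norm (vcond_exp M G D \<omega>))\<^sup>2 \<le> (b * n \<omega>)\<^sup>2" using elim(1) by (intro power_mono) auto
  with elim(2) show ?case by (simp add: power_mult_distrib algebra_simps)
qed

lemma expected_descent:
  fixes F :: "'v::real_inner \<Rightarrow> real" and gradF :: "'v \<Rightarrow> 'v" and W W' D :: "'a \<Rightarrow> 'v"
  assumes grad: "\<And>v. (F has_derivative (\<lambda>h. gradF v \<bullet> h)) (at v)"
    and lip: "\<And>v u. norm (gradF v - gradF u) \<le> L * norm (v - u)"
    and int_F: "integrable M (\<lambda>\<omega>. F (W \<omega>))" and int_F': "integrable M (\<lambda>\<omega>. F (W' \<omega>))"
    and int_inner: "integrable M (\<lambda>\<omega>. gradF (W \<omega>) \<bullet> D \<omega>)"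
    and int_D: "integrable M (\<lambda>\<omega>. (norm (D \<omega>))\<^sup>2)"
    and W': "\<And>\<omega>. \<omega> \<in> space M \<Longrightarrow> W' \<omega> = W \<omega> - \<alpha> *\<^sub>R D \<omega>"
  shows "(\<integral>\<omega>. F (W' \<omega>) \<partial>M) \<le> (\<integral>\<omega>. F (W \<omega>) \<partial>M) - \<alpha> * (\<integral>\<omega>. gradF (W \<omega>) \<bullet> D \<omega> \<partial>M)
           + \<alpha>\<^sup>2 * L / 2 * (\<integral>\<omega>. (norm (D \<omega>))\<^sup>2 \<partial>M)"
proof -
  have "(\<integral>\<omega>. F (W' \<omega>) \<partial>M)
      \<le> (\<integral>\<omega>. F (W \<omega>) - \<alpha> * (gradF (W \<omega>) \<bullet> D \<omega>) + \<alpha>\<^sup>2 * L / 2 * (norm (D \<omega>))\<^sup>2 \<partial>M)"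
  proof (rule integral_mono[OF int_F'])
    show "integrable M (\<lambda>\<omega>. F (W \<omega>) - \<alpha> * (gradF (W \<omega>) \<bullet> D \<omega>) + \<alpha>\<^sup>2 * L / 2 * (norm (D \<omega>))\<^sup>2)"
      using int_F int_inner int_D by simp
    fix \<omega> assume "\<omega> \<in> space M"
    then have "F (W' \<omega>) = F (W \<omega> - \<alpha> *\<^sub>R D \<omega>)" by (simp add: W')
    also have "\<dots> \<le> F (W \<omega>) + gradF (W \<omega>) \<bullet> ((W \<omega> - \<alpha> *\<^sub>R D \<omega>) - W \<omega>)
        + L / 2 * (norm ((W \<omega> - \<alpha> *\<^sub>R D \<omega>) - W \<omega>))\<^sup>2"
      by (rule lipschitz_gradient_descent[OF grad lip])
    also have "\<dots> = F (W \<omega>) - \<alpha> * (gradF (W \<omega>) \<bullet> D \<omega>) + \<alpha>\<^sup>2 * L / 2 * (norm (D \<omega>))\<^sup>2"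
      by (simp add: power_mult_distrib)
    finally show "F (W' \<omega>) \<le> F (W \<omega>) - \<alpha> * (gradF (W \<omega>) \<bullet> D \<omega>) + \<alpha>\<^sup>2 * L / 2 * (norm (D \<omega>))\<^sup>2" .
  qed
  also have "\<dots> = (\<integral>\<omega>. F (W \<omega>) \<partial>M) - \<alpha> * (\<integral>\<omega>. gradF (W \<omega>) \<bullet> D \<omega> \<partial>M)
           + \<alpha>\<^sup>2 * L / 2 * (\<integral>\<omega>. (norm (D \<omega>))\<^sup>2 \<partial>M)"
    using int_F int_inner int_D by simp
  finally show ?thesis .
qed

lemma expectation_moment_bounds:
  fixes Y D :: "'a \<Rightarrow> 'v::euclidean_space"
  assumes M: "prob_space M" and G: "subalgebra M G"
    and Y: "Y \<in> borel_measurable G" and D: "D \<in> borel_measurable M"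
    and int_Y: "integrable M (\<lambda>\<omega>. (norm (Y \<omega>))\<^sup>2)" and int_D: "integrable M (\<lambda>\<omega>. (norm (D \<omega>))\<^sup>2)"
    and first_moment: "AE \<omega> in M. \<mu>q * (norm (Y \<omega>))\<^sup>2 \<le> Y \<omega> \<bullet> vcond_exp M G D \<omega>"
    and second_moment: "AE \<omega> in M. real_cond_exp M G (\<lambda>\<omega>. (norm (D \<omega>))\<^sup>2) \<omega> \<le> Mt + MG * (norm (Y \<omega>))\<^sup>2"
  shows "integrable M (\<lambda>\<omega>. Y \<omega> \<bullet> D \<omega>)"
    and "\<mu>q * (\<integral>\<omega>. (norm (Y \<omega>))\<^sup>2 \<partial>M) \<le> (\<integral>\<omega>. Y \<omega> \<bullet> D \<omega> \<partial>M)"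
    and "(\<integral>\<omega>. (norm (D \<omega>))\<^sup>2 \<partial>M) \<le> Mt + MG * (\<integral>\<omega>. (norm (Y \<omega>))\<^sup>2 \<partial>M)"
proof -
  interpret prob_space M by (rule M)
  have sub: "sigma_finite_subalgebra M G"
    by (rule finite_measure_subalgebra_is_sigma_finite)
      (simp add: finite_measure_subalgebra_def finite_measure_subalgebra_axioms_def G finite_measure_axioms)
  interpret sigma_finite_subalgebra M G by (rule sub)
  note inner = integral_inner_vcond_exp[OF sub Y D int_D int_Y]
  show "integrable M (\<lambda>\<omega>. Y \<omega> \<bullet> D \<omega>)" by (rule inner(1))
  have "\<mu>q * (\<integral>\<omega>. (norm (Y \<omega>))\<^sup>2 \<partial>M) = (\<integral>\<omega>. \<mu>q * (norm (Y \<omega>))\<^sup>2 \<partial>M)" by simp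
  also have "\<dots> \<le> (\<integral>\<omega>. Y \<omega> \<bullet> vcond_exp M G D \<omega> \<partial>M)"
    using int_Y inner(2) first_moment by (intro integral_mono_AE) auto
  finally show "\<mu>q * (\<integral>\<omega>. (norm (Y \<omega>))\<^sup>2 \<partial>M) \<le> (\<integral>\<omega>. Y \<omega> \<bullet> D \<omega> \<partial>M)"
    unfolding inner(3) .
  have "(\<integral>\<omega>. (norm (D \<omega>))\<^sup>2 \<partial>M) = (\<integral>\<omega>. real_cond_exp M G (\<lambda>\<omega>. (norm (D \<omega>))\<^sup>2) \<omega> \<partial>M)"
    using real_cond_exp_int(2)[OF int_D] by simp
  also have "\<dots> \<le> (\<integral>\<omega>. Mt + MG * (norm (Y \<omega>))\<^sup>2 \<partial>M)"
    using real_cond_exp_int(1)[OF int_D] int_Y second_moment by (intro integral_mono_AE) auto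
  also have "\<dots> = Mt + MG * (\<integral>\<omega>. (norm (Y \<omega>))\<^sup>2 \<partial>M)" using int_Y by (simp add: prob_space)
  finally show "(\<integral>\<omega>. (norm (D \<omega>))\<^sup>2 \<partial>M) \<le> Mt + MG * (\<integral>\<omega>. (norm (Y \<omega>))\<^sup>2 \<partial>M)" .
qed

text \<open>In the application \<open>I\<close>, \<open>N\<close> and \<open>T\<close> are the expectations of \<open>\<nabla>F(w) \<bullet> g\<close>,
  \<open>|\<nabla>F(w)|\<^sup>2\<close> and \<open>|g|\<^sup>2\<close>, and \<open>e\<close>, \<open>e'\<close> the expected optimality gaps before and after the step.\<close>
lemma contraction_of_descent_bounds:
  fixes e e' I N T \<alpha> c L \<mu>q Mt MG :: real
  assumes descent: "e' \<le> e - \<alpha> * I + \<alpha>\<^sup>2 * L / 2 * T"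
    and first: "\<mu>q * N \<le> I" and second: "T \<le> Mt + MG * N" and PL: "2 * c * e \<le> N"
    and N: "0 \<le> N" and \<alpha>: "0 < \<alpha>" and L: "0 < L" and \<mu>q: "0 \<le> \<mu>q" and step: "\<alpha> * L * MG \<le> \<mu>q"
  shows "e' \<le> (1 - \<alpha> * c * \<mu>q) * e + \<alpha>\<^sup>2 * L * Mt / 2"
proof -
  have "\<alpha> * (\<mu>q * N) \<le> \<alpha> * I" using first \<alpha> by (intro mult_left_mono) auto
  moreover have "\<alpha>\<^sup>2 * L / 2 * T \<le> \<alpha>\<^sup>2 * L / 2 * (Mt + MG * N)"
    using second L by (intro mult_left_mono) auto
  ultimately have "e' \<le> e - \<alpha> * (\<mu>q * N) + \<alpha>\<^sup>2 * L / 2 * (Mt + MG * N)"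
    using descent by linarith
  also have "\<dots> = e - \<alpha> * \<mu>q / 2 * N - \<alpha> / 2 * (\<mu>q - \<alpha> * L * MG) * N + \<alpha>\<^sup>2 * L * Mt / 2"
    by (simp add: power2_eq_square algebra_simps)
  also have "\<dots> \<le> e - \<alpha> * \<mu>q / 2 * N + \<alpha>\<^sup>2 * L * Mt / 2"
    using step \<alpha> N mult_nonneg_nonneg[of "\<alpha> / 2 * (\<mu>q - \<alpha> * L * MG)" N] by simp
  also have "\<dots> \<le> e - \<alpha> * \<mu>q / 2 * (2 * c * e) + \<alpha>\<^sup>2 * L * Mt / 2"
    using PL \<alpha> \<mu>q mult_left_mono[OF PL, of "\<alpha> * \<mu>q / 2"] by simp
  also have "\<dots> = (1 - \<alpha> * c * \<mu>q) * e + \<alpha>\<^sup>2 * L * Mt / 2"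
    by (simp add: algebra_simps)
  finally show ?thesis .
qed

lemma sgd_step_contraction:
  fixes M G :: "'a measure" and F :: "'v::euclidean_space \<Rightarrow> real" and gradF :: "'v \<Rightarrow> 'v"
    and W W' D :: "'a \<Rightarrow> 'v"
  assumes M: "prob_space M" and G: "subalgebra M G"
    and grad: "\<And>v. (F has_derivative (\<lambda>h. gradF v \<bullet> h)) (at v)"
    and lip: "\<And>v u. norm (gradF v - gradF u) \<le> L * norm (v - u)" and L: "L > 0"
    and strong: "\<And>v u. F u \<ge> F v + gradF v \<bullet> (u - v) + c / 2 * (norm (u - v))\<^sup>2" and c: "c > 0"
    and min: "\<And>v. F wstar \<le> F v"
    and W: "W \<in> borel_measurable G" and D: "D \<in> borel_measurable M"
    and int_D: "integrable M (\<lambda>\<omega>. (norm (D \<omega>))\<^sup>2)"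
    and int_F: "integrable M (\<lambda>\<omega>. F (W \<omega>))" and int_F': "integrable M (\<lambda>\<omega>. F (W' \<omega>))"
    and W': "\<And>\<omega>. \<omega> \<in> space M \<Longrightarrow> W' \<omega> = W \<omega> - \<alpha> *\<^sub>R D \<omega>"
    and first_moment: "AE \<omega> in M. \<mu>q * (norm (gradF (W \<omega>)))\<^sup>2 \<le> gradF (W \<omega>) \<bullet> vcond_exp M G D \<omega>"
    and second_moment: "AE \<omega> in M.
          real_cond_exp M G (\<lambda>\<omega>. (norm (D \<omega>))\<^sup>2) \<omega> \<le> Mt + MG * (norm (gradF (W \<omega>)))\<^sup>2"
    and \<alpha>: "0 < \<alpha>" and \<mu>q: "0 \<le> \<mu>q" and step: "\<alpha> * L * MG \<le> \<mu>q"
  shows "(\<integral>\<omega>. F (W' \<omega>) - F wstar \<partial>M)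
           \<le> (1 - \<alpha> * c * \<mu>q) * (\<integral>\<omega>. F (W \<omega>) - F wstar \<partial>M) + \<alpha>\<^sup>2 * L * Mt / 2"
proof -
  interpret prob_space M by (rule M)
  have "continuous_on UNIV gradF"
    using lip L by (intro continuous_on_norm_diff_le_lipschitz) auto
  then have grad_W: "(\<lambda>\<omega>. gradF (W \<omega>)) \<in> borel_measurable G"
    using W by (rule borel_measurable_continuous_on)
  have int_grad: "integrable M (\<lambda>\<omega>. (norm (gradF (W \<omega>)))\<^sup>2)"
    using finite_measure_axioms grad lip L min measurable_from_subalg[OF G W] int_F
    by (rule integrable_norm_grad_comp_sq)
  note moments = expectation_moment_bounds[OF M G grad_W D int_grad int_D first_moment second_moment]
  have descent: "(\<integral>\<omega>. F (W' \<omega>) - F wstar \<partial>M) \<le> (\<integral>\<omega>. F (W \<omega>) - F wstar \<partial>M)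
      - \<alpha> * (\<integral>\<omega>. gradF (W \<omega>) \<bullet> D \<omega> \<partial>M) + \<alpha>\<^sup>2 * L / 2 * (\<integral>\<omega>. (norm (D \<omega>))\<^sup>2 \<partial>M)"
    using expected_descent[OF grad lip int_F int_F' moments(1) int_D W'] int_F int_F' by simp
  have "2 * c * (\<integral>\<omega>. F (W \<omega>) - F wstar \<partial>M) = (\<integral>\<omega>. 2 * c * (F (W \<omega>) - F wstar) \<partial>M)" by simp
  also have "\<dots> \<le> (\<integral>\<omega>. (norm (gradF (W \<omega>)))\<^sup>2 \<partial>M)"
    using int_F int_grad strongly_convex_gradient_dominance[OF strong c] by (intro integral_mono) auto
  finally have PL: "2 * c * (\<integral>\<omega>. F (W \<omega>) - F wstar \<partial>M) \<le> (\<integral>\<omega>. (norm (gradF (W \<omega>)))\<^sup>2 \<partial>M)" .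
  have "0 \<le> (\<integral>\<omega>. (norm (gradF (W \<omega>)))\<^sup>2 \<partial>M)" by simp
  from contraction_of_descent_bounds[OF descent moments(2,3) PL this \<alpha> L \<mu>q step]
  show ?thesis .
qed

theorem theorem1:
  fixes M :: "'a measure"
    and G :: "nat \<Rightarrow> 'a measure"
    and F :: "'v::euclidean_space \<Rightarrow> real" and gradF :: "'v \<Rightarrow> 'v"
    and L c :: real and wstar w1 :: 'v
    and g :: "'v \<Rightarrow> 'x \<Rightarrow> 'v"
    and \<xi> :: "nat \<Rightarrow> 'a \<Rightarrow> 'x" and q :: "nat \<Rightarrow> 'a \<Rightarrow> real" and \<epsilon> :: "nat \<Rightarrow> 'a \<Rightarrow> 'v"
    and w :: "nat \<Rightarrow> 'a \<Rightarrow> 'v"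
    and qmin qmax \<mu> \<mu>G Mt MV \<alpha> :: real
  defines "gt \<equiv> (\<lambda>k \<omega>. q k \<omega> *\<^sub>R g (w k \<omega>) (\<xi> k \<omega>) + \<epsilon> k \<omega>)"
  defines "Fstar \<equiv> F wstar"
  defines "\<mu>q \<equiv> qmin * \<mu>"
  defines "MG \<equiv> MV + qmax\<^sup>2 * \<mu>G\<^sup>2"
  assumes M: "prob_space M"
    and grad: "\<And>v. (F has_derivative (\<lambda>h. gradF v \<bullet> h)) (at v)"
    and L_pos: "L > 0"
    and lip: "\<And>v u. norm (gradF v - gradF u) \<le> L * norm (v - u)"
    and c_pos: "c > 0"
    and strong: "\<And>v u. F u \<ge> F v + gradF v \<bullet> (u - v) + c / 2 * (norm (u - v))\<^sup>2"
    and wstar_min: "\<And>v. F wstar \<le> F v"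
    and q_range: "0 < qmin" "qmin \<le> qmax" "qmax \<le> 1"
    and q_bounds: "\<And>k \<omega>. \<omega> \<in> space M \<Longrightarrow> qmin \<le> q k \<omega> \<and> q k \<omega> \<le> qmax"
    and G_sub: "\<And>k. subalgebra M (G k)"
    and w_meas: "\<And>k. k \<ge> 1 \<Longrightarrow> w k \<in> borel_measurable (G k)"
    and gt_meas: "\<And>k. k \<ge> 1 \<Longrightarrow> gt k \<in> borel_measurable M"
    and gt_int: "\<And>k. k \<ge> 1 \<Longrightarrow> integrable M (\<lambda>\<omega>. (norm (gt k \<omega>))\<^sup>2)"
    and F_int: "\<And>k. k \<ge> 1 \<Longrightarrow> integrable M (\<lambda>\<omega>. F (w k \<omega>))"
    and w_init: "\<And>\<omega>. \<omega> \<in> space M \<Longrightarrow> w 1 \<omega> = w1"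
    and w_step: "\<And>k \<omega>. k \<ge> 1 \<Longrightarrow> \<omega> \<in> space M \<Longrightarrow> w (Suc k) \<omega> = w k \<omega> - \<alpha> *\<^sub>R gt k \<omega>"
    and open_set: "\<exists>S. open S \<and> (\<forall>k\<ge>1. \<forall>\<omega>\<in>space M. w k \<omega> \<in> S) \<and> (\<forall>v\<in>S. F v \<ge> Fstar)"
    and mu: "\<mu> > 0" "\<mu>G \<ge> \<mu>"
    and first_moment: "\<And>k. k \<ge> 1 \<Longrightarrow> AE \<omega> in M.
          gradF (w k \<omega>) \<bullet> vcond_exp M (G k) (gt k) \<omega> \<ge> qmin * \<mu> * (norm (gradF (w k \<omega>)))\<^sup>2
        \<and> norm (vcond_exp M (G k) (gt k) \<omega>) \<le> qmax * \<mu>G * norm (gradF (w k \<omega>))"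
    and MV: "Mt \<ge> 0" "MV \<ge> 0"
    and second_moment: "\<And>k. k \<ge> 1 \<Longrightarrow> AE \<omega> in M.
          real_cond_exp M (G k) (\<lambda>x. (norm (gt k x))\<^sup>2) \<omega> - (norm (vcond_exp M (G k) (gt k) \<omega>))\<^sup>2
            \<le> Mt + MV * (norm (gradF (w k \<omega>)))\<^sup>2"
    and step: "0 < \<alpha>" "\<alpha> \<le> \<mu>q / (L * MG)"
  shows "(\<forall>k\<ge>1. integral\<^sup>L M (\<lambda>\<omega>. F (w k \<omega>) - Fstar)
              \<le> \<alpha> * L * Mt / (2 * c * \<mu>q)
                 + (1 - \<alpha> * c * \<mu>q) ^ (k - 1) * (F w1 - Fstar - \<alpha> * L * Mt / (2 * c * \<mu>q)))
       \<and> ((\<lambda>k. \<alpha> * L * Mt / (2 * c * \<mu>q)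
                 + (1 - \<alpha> * c * \<mu>q) ^ (k - 1) * (F w1 - Fstar - \<alpha> * L * Mt / (2 * c * \<mu>q)))
            \<longlonglongrightarrow> \<alpha> * L * Mt / (2 * c * \<mu>q))
       \<and> \<alpha> * L * Mt / (2 * c * \<mu>q) = 1 / qmin * (\<alpha> * L * Mt / (2 * c * \<mu>))"
proof -
  interpret prob_space M by (rule M)
  note step_size = low_precision_step_size[OF q_range(1,2) mu MV(2) c_pos
      strong_convexity_modulus_le_lipschitz[OF grad lip strong] step[unfolded \<mu>q_def MG_def],
      folded \<mu>q_def MG_def]
  have \<mu>q: "0 < \<mu>q" unfolding \<mu>q_def using q_range mu by simp
  define B where "B = \<alpha> * L * Mt / (2 * c * \<mu>q)"
  define e where "e k = (\<integral>\<omega>. F (w k \<omega>) - Fstar \<partial>M)" for k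
  have aB: "\<alpha> * c * \<mu>q * B = \<alpha>\<^sup>2 * L * Mt / 2"
    unfolding B_def using c_pos \<mu>q by (simp add: power2_eq_square field_simps)
  have "e (Suc k) \<le> (1 - \<alpha> * c * \<mu>q) * e k + (1 - (1 - \<alpha> * c * \<mu>q)) * B" if k: "k \<ge> 1" for k
  proof -
    note first = first_moment[OF k, unfolded AE_conj_iff, folded \<mu>q_def]
    note second = AE_cond_second_moment_le[OF first[THEN conjunct2] second_moment[OF k],
        unfolded power_mult_distrib, folded MG_def]
    show ?thesis
      using sgd_step_contraction[OF M G_sub grad lip L_pos strong c_pos wstar_min w_meas[OF k]
          gt_meas[OF k] gt_int[OF k] F_int[OF k] F_int w_step[OF k] first[THEN conjunct1] second step(1)
          less_imp_le[OF \<mu>q] step_size(1)] k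
      unfolding e_def Fstar_def by (simp add: aB)
  qed
  then have "e k \<le> B + (1 - \<alpha> * c * \<mu>q) ^ (k - 1) * (e 1 - B)" if "k \<ge> 1" for k
    using step_size(3) that by (intro affine_recursion_bound) auto
  moreover have "e 1 = F w1 - Fstar"
    unfolding e_def using w_init by (simp add: prob_space cong: Bochner_Integration.integral_cong)
  moreover have "\<bar>1 - \<alpha> * c * \<mu>q\<bar> < 1" using step_size(2,3) by simp
  ultimately show ?thesis
    using tendsto_offset_geometric unfolding e_def B_def \<mu>q_def by simp
qed

end
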